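(* Let $p\in S^n$ and $T_p=\{p\}\times(S^n\setminus\{p\})\subset\tilde S^n$. There exists a homotopy equivalence $\phi\colon\tilde S^n\to S^n$, equivariant with respect to $\tau$ on $\tilde S^n$ and the antipodal involution on $S^n$, which is transversal to a $0$-sphere $S^0\subset S^n$ (a pair of antipodal points) and satisfies $\phi^{-1}(S^0)=T_p\cup\tau T_p$.
   Context: $\tilde S^n=S^n\times S^n\setminus\Delta_{S^n}$ is the deleted product, and $\tau(x,y)=(y,x)$ is the factor exchanging involution on it. *)

theory Defs
  imports "HOL-Analysis.Analysis"
begin

abbreviation unit_sphere :: "'a::euclidean_space set" where
  "unit_sphere \<equiv> sphere 0 1"

definition deleted_sphere :: "('a::euclidean_space \<times> 'a) set" where
  "deleted_sphere = (unit_sphere \<times> unit_sphere) - {(x, x) | x. True}"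

definition tau :: "'a \<times> 'a \<Rightarrow> 'a \<times> 'a" where
  "tau z = (snd z, fst z)"

definition T_set :: "'a::euclidean_space \<Rightarrow> ('a \<times> 'a) set" where
  "T_set p = {p} \<times> (unit_sphere - {p})"

definition homotopy_equivalence_map :: "'a::topological_space set \<Rightarrow> 'b::topological_space set \<Rightarrow> ('a \<Rightarrow> 'b) \<Rightarrow> bool" where
  "homotopy_equivalence_map S T f \<longleftrightarrow>
     continuous_map (top_of_set S) (top_of_set T) f \<and>
     (\<exists>g. continuous_map (top_of_set T) (top_of_set S) g \<and>
          homotopic_with_canon (\<lambda>_. True) S S (g \<circ> f) id \<and>
          homotopic_with_canon (\<lambda>_. True) T T (f \<circ> g) id)"

definition sphere_tangent :: "'a::euclidean_space \<Rightarrow> 'a set" where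
  "sphere_tangent x = {v. v \<bullet> x = 0}"

definition prod_sphere_tangent :: "'a::euclidean_space \<times> 'a \<Rightarrow> ('a \<times> 'a) set" where
  "prod_sphere_tangent z = sphere_tangent (fst z) \<times> sphere_tangent (snd z)"

text \<open>A map phi from the deleted product (a submanifold of R^{n+1} x R^{n+1}) to S^n is
  transversal to the point q of S^n: at every z in phi^{-1}(q), phi is smooth near z
  (it agrees on a neighbourhood of z in the deleted product with a map F differentiable
  on an open set of the ambient space) and its differential maps the tangent space
  T_z(S^n x S^n) onto T_q S^n.\<close>
definition transversal_to_point :: "('a::euclidean_space \<times> 'a \<Rightarrow> 'a) \<Rightarrow> 'a \<Rightarrow> bool" where
  "transversal_to_point \<phi> q \<longleftrightarrow>
     (\<forall>z\<in>deleted_sphere. \<phi> z = q \<longrightarrow>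
        (\<exists>U F F'. open U \<and> z \<in> U \<and>
           (\<forall>w\<in>U. (F has_derivative F' w) (at w)) \<and>
           (\<forall>w\<in>U \<inter> deleted_sphere. F w = \<phi> w) \<and>
           F' z ` prod_sphere_tangent z = sphere_tangent q))"

end

theory Submission
  imports Defs
begin

(* The map is pole_map p (x, y) = sgn (|y - p|^2 x - |x - p|^2 y).  Its value always has positive
   inner product with x - y; for any such map, normalised straight-line homotopies (which stay
   on the sphere, resp. off the diagonal) show that x \<mapsto> (x, -x) is a homotopy inverse.
   Swapping x and y negates the field, which gives equivariance.  Comparing the components
   orthogonal to p shows that the field is parallel to p only if x = p or y = p.  At (p, y) the
   field is a positive multiple of p and the derivative of pole_map p on tangent vectors is
   (h, k) \<mapsto> h (at (y, p) it is (h, k) \<mapsto> -k), so the map is transversal to {p, -p}. *)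

lemma inner_lt_one_if_neq:
  fixes x y :: "'a::real_inner"
  assumes "norm x = 1" "norm y = 1" "x \<noteq> y"
  shows "x \<bullet> y < 1"
proof -
  have "0 < (x - y) \<bullet> (x - y)" using assms by simp
  also have "\<dots> = x \<bullet> x + y \<bullet> y - 2 * (x \<bullet> y)"
    by (simp add: inner_diff inner_commute)
  also have "\<dots> = 2 - 2 * (x \<bullet> y)"
    using assms by (simp add: dot_square_norm)
  finally show ?thesis by simp
qed

lemma inner_convex_combination_pos:
  fixes u v d :: "'a::real_inner"
  assumes "0 < u \<bullet> d" "0 < v \<bullet> d" "t \<in> {0..1}"
  shows "0 < ((1 - t) *\<^sub>R u + t *\<^sub>R v) \<bullet> d"
proof (cases "t = 1")
  case False
  with assms show ?thesis
    by (simp add: inner_add_left add_pos_nonneg)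
qed (use assms in simp)

lemma inner_sgn_pos_iff: "0 < sgn u \<bullet> d \<longleftrightarrow> 0 < u \<bullet> (d::'a::real_inner)"
  by (cases "u = 0") (simp_all add: sgn_div_norm zero_less_mult_iff)

lemma homotopic_with_canonI:
  fixes h :: "real \<times> 'a::topological_space \<Rightarrow> 'b::topological_space"
  assumes "continuous_on ({0..1} \<times> S) h" "h ` ({0..1} \<times> S) \<subseteq> T"
    and "\<And>x. x \<in> S \<Longrightarrow> h (0, x) = f x" "\<And>x. x \<in> S \<Longrightarrow> h (1, x) = g x"
  shows "homotopic_with_canon (\<lambda>_. True) S T f g"
  using assms by (subst homotopic_with) (auto intro!: exI[of _ h] simp: image_subset_iff_funcset)

lemma mem_deleted_sphere_iff:
  "(x, y) \<in> deleted_sphere \<longleftrightarrow> x \<in> unit_sphere \<and> y \<in> unit_sphere \<and> x \<noteq> y"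
  by (auto simp: deleted_sphere_def)

lemma tau_image_T_set: "tau ` T_set p = (unit_sphere - {p}) \<times> {p}"
  by (auto simp: T_set_def tau_def image_iff)

lemma antipodal_pair_in_deleted_sphere: "x \<in> unit_sphere \<Longrightarrow> (x, - x) \<in> deleted_sphere"
  by (auto simp: mem_deleted_sphere_iff)
    (metis norm_zero one_neq_neg_one scaleR_cancel_right scaleR_left.minus scaleR_one)

lemma homotopic_antipodal_restriction_id:
  fixes f :: "'a::euclidean_space \<times> 'a \<Rightarrow> 'a"
  assumes contf: "continuous_on deleted_sphere f"
    and f_sphere: "f ` deleted_sphere \<subseteq> unit_sphere"
    and f_pos: "\<And>x y. (x, y) \<in> deleted_sphere \<Longrightarrow> 0 < f (x, y) \<bullet> (x - y)"
  shows "homotopic_with_canon (\<lambda>_. True) unit_sphere unit_sphere (\<lambda>x. f (x, - x)) id"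
proof -
  define k where "k = (\<lambda>(t::real, x). (1 - t) *\<^sub>R f (x, - x) + t *\<^sub>R x)"
  have norm_f: "norm (f (x, - x)) = 1" if "x \<in> unit_sphere" for x
    using f_sphere antipodal_pair_in_deleted_sphere[OF that] by auto
  have k_pos: "0 < k (t, x) \<bullet> x" if "t \<in> {0..1}" "x \<in> unit_sphere" for t x
  proof -
    have "0 < f (x, - x) \<bullet> (x - - x)"
      using f_pos antipodal_pair_in_deleted_sphere[OF that(2)] by blast
    then have "0 < f (x, - x) \<bullet> x"
      by (simp add: inner_add_right)
    then show ?thesis
      using that by (simp add: k_def inner_convex_combination_pos dot_square_norm)
  qed
  have "continuous_on ({0..1} \<times> unit_sphere) k"
    unfolding k_def case_prod_unfold
    by (intro continuous_intros continuous_on_compose2[OF contf])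
      (auto intro: antipodal_pair_in_deleted_sphere)
  then have "continuous_on ({0..1} \<times> unit_sphere) (\<lambda>z. sgn (k z))"
    by (rule continuous_on_sgn) (use k_pos in fastforce)
  moreover have "(\<lambda>z. sgn (k z)) ` ({0..1} \<times> unit_sphere) \<subseteq> unit_sphere"
    using k_pos by (fastforce simp: norm_sgn)
  ultimately show ?thesis
    by (rule homotopic_with_canonI) (auto simp: k_def sgn_div_norm norm_f)
qed

lemma homotopic_antipodal_pair_id:
  fixes f :: "'a::euclidean_space \<times> 'a \<Rightarrow> 'a"
  assumes contf: "continuous_on deleted_sphere f"
    and f_sphere: "f ` deleted_sphere \<subseteq> unit_sphere"
    and f_pos: "\<And>x y. (x, y) \<in> deleted_sphere \<Longrightarrow> 0 < f (x, y) \<bullet> (x - y)"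
  shows "homotopic_with_canon (\<lambda>_. True) deleted_sphere deleted_sphere (\<lambda>z. (f z, - f z)) id"
proof -
  define k where "k = (\<lambda>(t::real, z). (1 - t) *\<^sub>R f z + t *\<^sub>R fst z)"
  define l where "l = (\<lambda>(t::real, z). (1 - t) *\<^sub>R - f z + t *\<^sub>R snd z)"
  have kl_pos: "0 < k (t, (x, y)) \<bullet> (x - y) \<and> 0 < l (t, (x, y)) \<bullet> (y - x)"
    if "t \<in> {0..1}" "(x, y) \<in> deleted_sphere" for t x y
  proof -
    have x_pos: "0 < x \<bullet> (x - y)" and y_pos: "0 < y \<bullet> (y - x)"
      using that(2) inner_lt_one_if_neq[of x y]
      by (auto simp: mem_deleted_sphere_iff inner_diff_right dot_square_norm inner_commute)
    have f_neg: "0 < - f (x, y) \<bullet> (y - x)"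
      using f_pos[OF that(2)] by (simp add: inner_diff_right)
    show ?thesis
      unfolding k_def l_def prod.case
      using inner_convex_combination_pos[OF f_pos[OF that(2)] x_pos that(1)]
        inner_convex_combination_pos[OF f_neg y_pos that(1)] by simp
  qed
  have norm_f: "norm (f z) = 1" if "z \<in> deleted_sphere" for z
    using f_sphere that by auto
  define h where "h z = (sgn (k z), sgn (l z))" for z
  have kl_nonzero: "k w \<noteq> 0 \<and> l w \<noteq> 0" if "w \<in> {0..1} \<times> deleted_sphere" for w
    using that kl_pos by fastforce
  have "continuous_on ({0..1} \<times> deleted_sphere) k" "continuous_on ({0..1} \<times> deleted_sphere) l"
    unfolding k_def l_def case_prod_unfold
    by (intro continuous_intros continuous_on_compose2[OF contf]; force)+
  then have "continuous_on ({0..1} \<times> deleted_sphere) h"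
    unfolding h_def using kl_nonzero by (intro continuous_intros) auto
  moreover have "h (t, (x, y)) \<in> deleted_sphere"
    if "t \<in> {0..1}" "(x, y) \<in> deleted_sphere" for t x y
  proof -
    have "0 < sgn (k (t, (x, y))) \<bullet> (x - y)" "0 < sgn (l (t, (x, y))) \<bullet> (y - x)"
      and "k (t, (x, y)) \<noteq> 0" "l (t, (x, y)) \<noteq> 0"
      using that kl_pos[of t x y] by (auto simp: inner_sgn_pos_iff)
    moreover have "sgn (l (t, (x, y))) \<bullet> (y - x) = - (sgn (l (t, (x, y))) \<bullet> (x - y))"
      by (simp add: inner_diff_right)
    ultimately show ?thesis
      by (auto simp: h_def mem_deleted_sphere_iff norm_sgn)
  qed
  then have "h ` ({0..1} \<times> deleted_sphere) \<subseteq> deleted_sphere"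
    by auto
  ultimately show ?thesis
    by (rule homotopic_with_canonI)
      (auto simp: h_def k_def l_def sgn_div_norm norm_f mem_deleted_sphere_iff)
qed

lemma homotopy_equivalence_deleted_sphere:
  fixes f :: "'a::euclidean_space \<times> 'a \<Rightarrow> 'a"
  assumes contf: "continuous_on deleted_sphere f"
    and f_sphere: "f ` deleted_sphere \<subseteq> unit_sphere"
    and f_pos: "\<And>x y. (x, y) \<in> deleted_sphere \<Longrightarrow> 0 < f (x, y) \<bullet> (x - y)"
  shows "homotopy_equivalence_map deleted_sphere unit_sphere f"
  unfolding homotopy_equivalence_map_def
proof (intro conjI exI)
  show "continuous_map (top_of_set deleted_sphere) (top_of_set unit_sphere) f"
    using contf f_sphere by (simp add: image_subset_iff_funcset)
  show "continuous_map (top_of_set unit_sphere) (top_of_set deleted_sphere) (\<lambda>x. (x, - x))"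
    using antipodal_pair_in_deleted_sphere by (auto intro!: continuous_intros)
  show "homotopic_with_canon (\<lambda>_. True) unit_sphere unit_sphere (f \<circ> (\<lambda>x. (x, - x))) id"
    using homotopic_antipodal_restriction_id[OF assms] by (simp add: o_def)
  show "homotopic_with_canon (\<lambda>_. True) deleted_sphere deleted_sphere ((\<lambda>x. (x, - x)) \<circ> f) id"
    using homotopic_antipodal_pair_id[OF assms] by (simp add: o_def)
qed

definition sgn_derivative :: "'a::real_inner \<Rightarrow> 'a \<Rightarrow> 'a" where
  "sgn_derivative v h = (h - (sgn v \<bullet> h) *\<^sub>R sgn v) /\<^sub>R norm v"

lemma has_derivative_sgn:
  fixes v :: "'a::real_inner"
  assumes "v \<noteq> 0"
  shows "(sgn has_derivative sgn_derivative v) (at v)"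
proof -
  have sgn_eq: "sgn = (\<lambda>v. inverse (norm v) *\<^sub>R v)"
    by (simp add: fun_eq_iff sgn_div_norm divide_inverse_commute)
  have "norm v > 0" using assms by simp
  then show ?thesis
    unfolding sgn_eq sgn_derivative_def
    by (auto intro!: derivative_eq_intros has_derivative_norm[OF assms]
        simp: fun_eq_iff sgn_div_norm field_simps power2_eq_square inner_commute)
qed

lemma sgn_derivative_scaleR:
  fixes p :: "'a::real_inner"
  assumes "a \<noteq> 0" "norm p = 1"
  shows "sgn_derivative (a *\<^sub>R p) h = (h - (p \<bullet> h) *\<^sub>R p) /\<^sub>R \<bar>a\<bar>"
proof -
  have "sgn (a *\<^sub>R p) = sgn a *\<^sub>R p" "sgn a * sgn a = 1"
    using assms by (simp add: sgn_scaleR sgn_div_norm, simp add: sgn_if)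
  then show ?thesis
    using assms by (simp add: sgn_derivative_def)
qed

definition pole_field :: "'a::real_inner \<Rightarrow> 'a \<times> 'a \<Rightarrow> 'a" where
  "pole_field p z = ((snd z - p) \<bullet> (snd z - p)) *\<^sub>R fst z - ((fst z - p) \<bullet> (fst z - p)) *\<^sub>R snd z"

definition pole_map :: "'a::real_inner \<Rightarrow> 'a \<times> 'a \<Rightarrow> 'a" where
  "pole_map p z = sgn (pole_field p z)"

lemma pole_field_swap: "pole_field p (y, x) = - pole_field p (x, y)"
  by (simp add: pole_field_def)

lemma pole_field_pole:
  "pole_field p (p, y) = ((y - p) \<bullet> (y - p)) *\<^sub>R p"
  "pole_field p (y, p) = - ((y - p) \<bullet> (y - p)) *\<^sub>R p"
  by (simp_all add: pole_field_def)

lemma inner_pole_field_diff: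
  fixes x y p :: "'a::real_inner"
  assumes "norm x = 1" "norm y = 1"
  shows "pole_field p (x, y) \<bullet> (x - y) = ((x - p) \<bullet> (x - p) + (y - p) \<bullet> (y - p)) * (1 - x \<bullet> y)"
proof -
  define a where "a = (y - p) \<bullet> (y - p)"
  define b where "b = (x - p) \<bullet> (x - p)"
  have "x \<bullet> x = 1" "y \<bullet> y = 1"
    using assms by (simp_all add: dot_square_norm)
  moreover have "pole_field p (x, y) = a *\<^sub>R x - b *\<^sub>R y"
    by (simp add: pole_field_def a_def b_def)
  ultimately show ?thesis
    unfolding a_def[symmetric] b_def[symmetric]
    by (simp only: inner_diff_left inner_diff_right inner_scaleR_left)
      (simp add: inner_commute algebra_simps)
qed

lemma pole_field_inner_diff_pos:
  assumes "(x, y) \<in> deleted_sphere"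
  shows "0 < pole_field p (x, y) \<bullet> (x - y)"
proof -
  have "x \<noteq> p \<or> y \<noteq> p" "x \<bullet> y < 1"
    using assms inner_lt_one_if_neq by (auto simp: mem_deleted_sphere_iff)
  then have "0 < (x - p) \<bullet> (x - p) + (y - p) \<bullet> (y - p)"
    by (auto intro: add_pos_nonneg add_nonneg_pos)
  with \<open>x \<bullet> y < 1\<close> have "0 < ((x - p) \<bullet> (x - p) + (y - p) \<bullet> (y - p)) * (1 - x \<bullet> y)"
    by simp
  with assms show ?thesis
    by (simp add: inner_pole_field_diff mem_deleted_sphere_iff)
qed

lemma pole_field_nonzero: "z \<in> deleted_sphere \<Longrightarrow> pole_field p z \<noteq> 0"
  using pole_field_inner_diff_pos[of "fst z" "snd z" p] by auto

lemma continuous_on_pole_field: "continuous_on S (pole_field p)"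
  unfolding pole_field_def[abs_def] by (intro continuous_intros)

lemma continuous_on_pole_map: "continuous_on deleted_sphere (pole_map p)"
  unfolding pole_map_def[abs_def]
  by (rule continuous_on_sgn[OF continuous_on_pole_field]) (simp add: pole_field_nonzero)

lemma pole_map_in_sphere: "pole_map p ` deleted_sphere \<subseteq> unit_sphere"
  by (auto simp: pole_map_def norm_sgn pole_field_nonzero)

lemma pole_map_inner_diff_pos:
  "(x, y) \<in> deleted_sphere \<Longrightarrow> 0 < pole_map p (x, y) \<bullet> (x - y)"
  by (simp add: pole_map_def inner_sgn_pos_iff pole_field_inner_diff_pos)

lemma pole_map_tau: "pole_map p (tau z) = - pole_map p z"
  unfolding pole_map_def tau_def
  by (subst pole_field_swap) (simp add: sgn_minus)

lemma pole_field_parallel_imp_pole: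
  fixes x y p :: "'a::real_inner"
  assumes x: "norm x = 1" and y: "norm y = 1" and p: "norm p = 1" and "x \<noteq> y"
    and parallel: "pole_field p (x, y) = c *\<^sub>R p"
  shows "x = p \<or> y = p"
proof (rule ccontr)
  assume "\<not> (x = p \<or> y = p)"
  then have X: "x \<bullet> p < 1" and Y: "y \<bullet> p < 1"
    using inner_lt_one_if_neq x y p by auto
  define a where "a = 2 - 2 * (y \<bullet> p)"
  define b where "b = 2 - 2 * (x \<bullet> p)"
  define u where "u = x - (x \<bullet> p) *\<^sub>R p"
  define v where "v = y - (y \<bullet> p) *\<^sub>R p"
  have unit: "x \<bullet> x = 1" "y \<bullet> y = 1" "p \<bullet> p = 1"
    using x y p by (simp_all add: dot_square_norm)
  have "pole_field p (x, y) = a *\<^sub>R x - b *\<^sub>R y"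
    by (simp add: pole_field_def a_def b_def inner_diff inner_commute unit)
  then have uv_parallel: "a *\<^sub>R u - b *\<^sub>R v = (c - a * (x \<bullet> p) + b * (y \<bullet> p)) *\<^sub>R p"
    using parallel by (simp add: u_def v_def algebra_simps)
  moreover have "(a *\<^sub>R u - b *\<^sub>R v) \<bullet> p = 0"
    by (simp add: u_def v_def inner_diff_left unit)
  ultimately have "c - a * (x \<bullet> p) + b * (y \<bullet> p) = 0"
    using unit by simp
  with uv_parallel have uv: "a *\<^sub>R u = b *\<^sub>R v"
    by simp
  have uu: "u \<bullet> u = 1 - (x \<bullet> p)\<^sup>2" and vv: "v \<bullet> v = 1 - (y \<bullet> p)\<^sup>2"
    by (simp_all add: u_def v_def inner_diff inner_commute unit power2_eq_square)
  have "a * a * (u \<bullet> u) = b * b * (v \<bullet> v)"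
    using uv by (metis inner_scaleR_left inner_scaleR_right mult.assoc)
  then have "a * a * (1 - (x \<bullet> p)\<^sup>2) = b * b * (1 - (y \<bullet> p)\<^sup>2)"
    by (simp only: uu vv)
  then have "8 * ((1 - x \<bullet> p) * (1 - y \<bullet> p)) * (x \<bullet> p - y \<bullet> p) = 0"
    by (simp add: a_def b_def power2_eq_square algebra_simps)
  then have "x \<bullet> p = y \<bullet> p"
    using X Y by simp
  then have "u = v"
    using uv Y by (simp add: a_def b_def)
  with \<open>x \<bullet> p = y \<bullet> p\<close> \<open>x \<noteq> y\<close> show False
    by (simp add: u_def v_def)
qed

lemma pole_map_pole:
  fixes y p :: "'a::real_inner"
  assumes "norm p = 1" "y \<noteq> p"
  shows "pole_map p (p, y) = p" "pole_map p (y, p) = - p"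
  using assms by (simp_all add: pole_map_def pole_field_pole sgn_scaleR sgn_minus sgn_div_norm)

lemma pole_map_in_poles_iff:
  fixes p :: "'a::euclidean_space"
  assumes "(x, y) \<in> deleted_sphere" "p \<in> unit_sphere"
  shows "pole_map p (x, y) \<in> {p, - p} \<longleftrightarrow> x = p \<or> y = p"
proof
  assume "pole_map p (x, y) \<in> {p, - p}"
  moreover have "pole_field p (x, y) = norm (pole_field p (x, y)) *\<^sub>R pole_map p (x, y)"
    using pole_field_nonzero[OF assms(1)] by (simp add: pole_map_def sgn_div_norm)
  ultimately obtain c where "pole_field p (x, y) = c *\<^sub>R p"
    by (metis insertE scaleR_minus_right scaleR_minus_left singletonD)
  with assms show "x = p \<or> y = p"
    by (intro pole_field_parallel_imp_pole) (auto simp: mem_deleted_sphere_iff)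
next
  assume "x = p \<or> y = p"
  with assms show "pole_map p (x, y) \<in> {p, - p}"
    by (auto simp: mem_deleted_sphere_iff pole_map_pole)
qed

lemma pole_map_preimage_poles:
  fixes p :: "'a::euclidean_space"
  assumes "p \<in> unit_sphere"
  shows "{z \<in> deleted_sphere. pole_map p z \<in> {p, - p}} = T_set p \<union> tau ` T_set p"
proof -
  have "z \<in> deleted_sphere \<and> pole_map p z \<in> {p, - p} \<longleftrightarrow> z \<in> T_set p \<union> tau ` T_set p" for z
    unfolding tau_image_T_set
    using pole_map_in_poles_iff[of "fst z" "snd z" p] assms
    by (cases z) (auto simp: T_set_def mem_deleted_sphere_iff)
  then show ?thesis
    by blast
qed

definition pole_field_derivative :: "'a::real_inner \<Rightarrow> 'a \<times> 'a \<Rightarrow> 'a \<times> 'a \<Rightarrow> 'a" where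
  "pole_field_derivative p z d =
     (2 * ((snd z - p) \<bullet> snd d)) *\<^sub>R fst z + ((snd z - p) \<bullet> (snd z - p)) *\<^sub>R fst d
     - (2 * ((fst z - p) \<bullet> fst d)) *\<^sub>R snd z - ((fst z - p) \<bullet> (fst z - p)) *\<^sub>R snd d"

lemma has_derivative_pole_field:
  "(pole_field p has_derivative pole_field_derivative p z) (at z)"
  unfolding pole_field_def[abs_def] pole_field_derivative_def[abs_def]
  by (auto intro!: derivative_eq_intros simp: fun_eq_iff algebra_simps inner_commute)

lemma has_derivative_pole_map:
  assumes "pole_field p z \<noteq> 0"
  shows "(pole_map p has_derivative
           (\<lambda>d. sgn_derivative (pole_field p z) (pole_field_derivative p z d))) (at z)"
  unfolding pole_map_def[abs_def]
  using has_derivative_compose[OF has_derivative_pole_field has_derivative_sgn[OF assms]] .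

lemma pole_map_derivative_pole:
  fixes y p :: "'a::real_inner"
  assumes "norm p = 1" "y \<noteq> p"
  shows "p \<bullet> h = 0 \<Longrightarrow> sgn_derivative (pole_field p (p, y)) (pole_field_derivative p (p, y) (h, k)) = h"
    and "p \<bullet> k = 0 \<Longrightarrow> sgn_derivative (pole_field p (y, p)) (pole_field_derivative p (y, p) (h, k)) = - k"
proof -
  define a where "a = (y - p) \<bullet> (y - p)"
  have "a > 0" "p \<bullet> p = 1"
    using assms by (simp_all add: a_def dot_square_norm)
  have left: "pole_field p (p, y) = a *\<^sub>R p"
    "pole_field_derivative p (p, y) (h, k) = (2 * ((y - p) \<bullet> k)) *\<^sub>R p + a *\<^sub>R h"
    by (simp_all add: pole_field_pole pole_field_derivative_def a_def)
  have right: "pole_field p (y, p) = (- a) *\<^sub>R p"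
    "pole_field_derivative p (y, p) (h, k) = (- 2 * ((y - p) \<bullet> h)) *\<^sub>R p - a *\<^sub>R k"
    by (simp_all add: pole_field_pole pole_field_derivative_def a_def)
  show "p \<bullet> h = 0 \<Longrightarrow> sgn_derivative (pole_field p (p, y)) (pole_field_derivative p (p, y) (h, k)) = h"
    using \<open>a > 0\<close> \<open>p \<bullet> p = 1\<close> assms(1)
    by (simp add: left sgn_derivative_scaleR inner_add_right algebra_simps)
  show "p \<bullet> k = 0 \<Longrightarrow> sgn_derivative (pole_field p (y, p)) (pole_field_derivative p (y, p) (h, k)) = - k"
    unfolding right using \<open>a > 0\<close> \<open>p \<bullet> p = 1\<close> assms(1)
    by (subst sgn_derivative_scaleR) (simp_all add: inner_diff_right algebra_simps)
qed

lemma sphere_tangent_neg: "sphere_tangent (- x) = sphere_tangent x"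
  by (simp add: sphere_tangent_def)

lemma uminus_image_sphere_tangent: "uminus ` sphere_tangent x = sphere_tangent x"
  by (force simp: sphere_tangent_def image_iff intro: exI[of _ "- _"])

lemma zero_in_sphere_tangent: "0 \<in> sphere_tangent x"
  by (simp add: sphere_tangent_def)

lemma pole_map_derivative_image:
  fixes p :: "'a::euclidean_space"
  assumes p: "p \<in> unit_sphere" and z: "z \<in> deleted_sphere" and "pole_map p z \<in> {p, - p}"
  shows "(\<lambda>d. sgn_derivative (pole_field p z) (pole_field_derivative p z d)) ` prod_sphere_tangent z
           = sphere_tangent p"
    (is "?D ` _ = _")
proof -
  obtain x y where z_eq: "z = (x, y)" by (cases z)
  with assms have "x = p \<or> y = p" "x \<noteq> y"
    using pole_map_in_poles_iff by (auto simp: mem_deleted_sphere_iff)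
  then consider "x = p" "y \<noteq> p" | "y = p" "x \<noteq> p" by blast
  then show ?thesis
  proof cases
    case 1
    then have "?D ` (sphere_tangent p \<times> sphere_tangent y) = fst ` (sphere_tangent p \<times> sphere_tangent y)"
      using p by (intro image_cong) (auto simp: z_eq pole_map_derivative_pole sphere_tangent_def inner_commute)
    also have "\<dots> = sphere_tangent p"
      using zero_in_sphere_tangent by auto
    finally show ?thesis
      using 1 by (simp add: z_eq prod_sphere_tangent_def)
  next
    case 2
    then have "?D ` (sphere_tangent x \<times> sphere_tangent p) = (\<lambda>d. - snd d) ` (sphere_tangent x \<times> sphere_tangent p)"
      using p by (intro image_cong) (auto simp: z_eq pole_map_derivative_pole sphere_tangent_def inner_commute)
    also have "\<dots> = uminus ` snd ` (sphere_tangent x \<times> sphere_tangent p)"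
      by (simp only: image_image)
    also have "\<dots> = sphere_tangent p"
      using zero_in_sphere_tangent by (auto simp: uminus_image_sphere_tangent)
    finally show ?thesis
      using 2 by (simp add: z_eq prod_sphere_tangent_def)
  qed
qed

lemma transversal_pole_map:
  fixes p :: "'a::euclidean_space"
  assumes p: "p \<in> unit_sphere" and q: "q \<in> {p, - p}"
  shows "transversal_to_point (pole_map p) q"
  unfolding transversal_to_point_def
proof (intro ballI impI)
  fix z assume z: "z \<in> deleted_sphere" and "pole_map p z = q"
  then have "(\<lambda>d. sgn_derivative (pole_field p z) (pole_field_derivative p z d)) ` prod_sphere_tangent z
               = sphere_tangent q"
    using pole_map_derivative_image[OF p z] q by (auto simp: sphere_tangent_neg)
  moreover have "open {w. pole_field p w \<noteq> 0}"
    by (intro open_Collect_neq continuous_on_pole_field continuous_on_const)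
  ultimately show "\<exists>U F F'. open U \<and> z \<in> U \<and> (\<forall>w\<in>U. (F has_derivative F' w) (at w)) \<and>
      (\<forall>w\<in>U \<inter> deleted_sphere. F w = pole_map p w) \<and> F' z ` prod_sphere_tangent z = sphere_tangent q"
    using pole_field_nonzero[OF z]
    by (intro exI[of _ "{w. pole_field p w \<noteq> 0}"] exI[of _ "pole_map p"]
        exI[of _ "\<lambda>w d. sgn_derivative (pole_field p w) (pole_field_derivative p w d)"])
      (auto intro: has_derivative_pole_map)
qed

theorem lemma8:
  fixes p :: "'a::euclidean_space"
  assumes "p \<in> unit_sphere"
  shows "\<exists>(\<phi> :: 'a \<times> 'a \<Rightarrow> 'a) q.
           homotopy_equivalence_map deleted_sphere unit_sphere \<phi> \<and>
           (\<forall>z\<in>deleted_sphere. \<phi> (tau z) = - \<phi> z) \<and>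
           q \<in> unit_sphere \<and>
           transversal_to_point \<phi> q \<and> transversal_to_point \<phi> (- q) \<and>
           {z \<in> deleted_sphere. \<phi> z \<in> {q, - q}} = T_set p \<union> tau ` T_set p"
proof (intro exI conjI ballI)
  show "homotopy_equivalence_map deleted_sphere unit_sphere (pole_map p)"
    using continuous_on_pole_map pole_map_in_sphere pole_map_inner_diff_pos
    by (rule homotopy_equivalence_deleted_sphere)
  show "pole_map p (tau z) = - pole_map p z" for z
    by (rule pole_map_tau)
  show "transversal_to_point (pole_map p) p" "transversal_to_point (pole_map p) (- p)"
    using transversal_pole_map[OF assms] by simp_all
  show "{z \<in> deleted_sphere. pole_map p z \<in> {p, - p}} = T_set p \<union> tau ` T_set p"
    using pole_map_preimage_poles[OF assms] .
qed (fact assms)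

end
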